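(* Let $p\ge 3$ and let $G=(V,E,F)$ be a locally tessellating planar graph without cut locus such that $|v|\le p$ for all $v\in V$. Then for every $v_0\in V$, $\mu(G,v_0)\le \mu(T_p)=\log(p-1)$, where $T_p$ is the $p$-regular tree.
   Context: A planar graph $G=(V,E)$ is embedded in $\mathbb{R}^2$ with edges continuous rectifiable curves without self-intersections; its faces are the closures of the connected components of $\mathbb{R}^2 \setminus \bigcup_{e\in E} e$. $G$ is simple if it has no loops, no multiple edges, no vertices of degree one, every vertex has finite degree, and every bounded open subset of $\mathbb{R}^2$ meets only finitely many faces. The degree $|f|$ of a face is the length of a shortest closed walk in its boundary subgraph meeting all its vertices ($\infty$ if none). A simple planar graph is locally tessellating if: (i) every edge lies in precisely two different faces; (ii) any two faces are disjoint or share precisely a vertex or a path of edges, and if this path has length $>1$ both faces are unbounded; (iii) every face is homeomorphic to a closed disc, to $\mathbb{R}^2$ minus an open disc, or to the closed upper half plane, and its boundary is a path. With $d$ the combinatorial distance, ${\rm Cut}(v)=\{w\in V: d(v,w')\le d(v,w)\text{ for all } w'\text{ adjacent to } w\}$, and $G$ is without cut locus if ${\rm Cut}(v)=\emptyset$ for all $v$. With $\sigma_n=|\{v: d(v_0,v)=n\}|$, the exponential growth is $\mu(G,v_0)=\limsup_{n\to\infty}\frac{\log\sigma_n}{n}$. *)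

theory Defs
  imports "HOL-Analysis.Analysis"
begin

text \<open>A graph is given by its vertex set
  V (points of the plane) and its edge set E, each edge being the image (a subset of
  the plane) of a rectifiable arc whose endpoints are exactly the vertices on it.\<close>

definition rectifiable_curve :: "(real \<Rightarrow> complex) \<Rightarrow> bool" where
  "rectifiable_curve g \<longleftrightarrow> path g \<and>
     bdd_above {(\<Sum>i<n. norm (g (t (Suc i)) - g (t i))) | t n.
                 t 0 = 0 \<and> t n = 1 \<and> (\<forall>i<n. t i \<le> t (Suc i))}"

definition is_edge_curve :: "complex set \<Rightarrow> complex set \<Rightarrow> bool" where
  "is_edge_curve V e \<longleftrightarrow> (\<exists>g. arc g \<and> rectifiable_curve g \<and> path_image g = e \<and>
       pathstart g \<in> V \<and> pathfinish g \<in> V \<and> e \<inter> V = {pathstart g, pathfinish g})"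

definition adj :: "complex set \<Rightarrow> complex set set \<Rightarrow> complex \<Rightarrow> complex \<Rightarrow> bool" where
  "adj V E v w \<longleftrightarrow> (\<exists>e\<in>E. e \<inter> V = {v, w})"

definition vdeg :: "complex set \<Rightarrow> complex set set \<Rightarrow> complex \<Rightarrow> nat" where
  "vdeg V E v = card {e\<in>E. v \<in> e}"

definition faces :: "complex set set \<Rightarrow> complex set set" where
  "faces E = closure ` components (- \<Union>E)"

definition simple_planar_graph :: "complex set \<Rightarrow> complex set set \<Rightarrow> bool" where
  "simple_planar_graph V E \<longleftrightarrow>
     (\<forall>e\<in>E. is_edge_curve V e) \<and>
     (\<forall>e\<in>E. \<forall>e'\<in>E. e \<noteq> e' \<longrightarrow> e \<inter> e' \<subseteq> V) \<and>
     (\<forall>e\<in>E. \<forall>e'\<in>E. e \<inter> V = e' \<inter> V \<longrightarrow> e = e') \<and>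
     (\<forall>v\<in>V. finite {e\<in>E. v \<in> e} \<and> vdeg V E v \<noteq> 1) \<and>
     (\<forall>U. open U \<and> bounded U \<longrightarrow> finite {f\<in>faces E. f \<inter> U \<noteq> {}})"

text \<open>paths in the graph, indexed by an interval of integers (finite, one-sided or
  two-sided infinite)\<close>
definition int_interval :: "int set \<Rightarrow> bool" where
  "int_interval I \<longleftrightarrow> (\<forall>i\<in>I. \<forall>k\<in>I. \<forall>j. i \<le> j \<and> j \<le> k \<longrightarrow> j \<in> I)"

definition graph_path :: "complex set \<Rightarrow> complex set set \<Rightarrow> int set \<Rightarrow> (int \<Rightarrow> complex) \<Rightarrow> bool" where
  "graph_path V E I x \<longleftrightarrow> int_interval I \<and> (\<exists>i. i \<in> I \<and> i + 1 \<in> I) \<and> inj_on x I \<and>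
     x ` I \<subseteq> V \<and> (\<forall>i. i \<in> I \<and> i + 1 \<in> I \<longrightarrow> adj V E (x i) (x (i + 1)))"

definition path_edges :: "complex set \<Rightarrow> complex set set \<Rightarrow> int set \<Rightarrow> (int \<Rightarrow> complex) \<Rightarrow> complex set set" where
  "path_edges V E I x = {e\<in>E. \<exists>i. i \<in> I \<and> i + 1 \<in> I \<and> e \<inter> V = {x i, x (i + 1)}}"

definition graph_cycle :: "complex set \<Rightarrow> complex set set \<Rightarrow> nat \<Rightarrow> (nat \<Rightarrow> complex) \<Rightarrow> bool" where
  "graph_cycle V E n x \<longleftrightarrow> 3 \<le> n \<and> inj_on x {..<n} \<and> x ` {..<n} \<subseteq> V \<and>
     (\<forall>i<n. adj V E (x i) (x (Suc i mod n)))"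

definition cycle_edges :: "complex set \<Rightarrow> complex set set \<Rightarrow> nat \<Rightarrow> (nat \<Rightarrow> complex) \<Rightarrow> complex set set" where
  "cycle_edges V E n x = {e\<in>E. \<exists>i<n. e \<inter> V = {x i, x (Suc i mod n)}}"

definition locally_tessellating :: "complex set \<Rightarrow> complex set set \<Rightarrow> bool" where
  "locally_tessellating V E \<longleftrightarrow> simple_planar_graph V E \<and>
     \<comment> \<open>(i)\<close>
     (\<forall>e\<in>E. card {f\<in>faces E. e \<subseteq> f} = 2) \<and>
     \<comment> \<open>(ii)\<close>
     (\<forall>f\<in>faces E. \<forall>f'\<in>faces E. f \<noteq> f' \<longrightarrow>
        f \<inter> f' = {} \<or> (\<exists>v\<in>V. f \<inter> f' = {v}) \<or>
        (\<exists>I x. graph_path V E I x \<and> f \<inter> f' = \<Union>(path_edges V E I x) \<and>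
           ((infinite I \<or> card I > 2) \<longrightarrow> \<not> bounded f \<and> \<not> bounded f'))) \<and>
     \<comment> \<open>(iii)\<close>
     (\<forall>f\<in>faces E.
        (f homeomorphic cball (0::complex) 1 \<or> f homeomorphic (- ball (0::complex) 1) \<or>
         f homeomorphic {z::complex. Im z \<ge> 0}) \<and>
        ((\<exists>n x. graph_cycle V E n x \<and> frontier f = \<Union>(cycle_edges V E n x)) \<or>
         (\<exists>I x. graph_path V E I x \<and> frontier f = \<Union>(path_edges V E I x))))"

text \<open>combinatorial distance (\<infinity> if no connecting walk)\<close>
definition adj_rel :: "complex set \<Rightarrow> complex set set \<Rightarrow> (complex \<times> complex) set" where
  "adj_rel V E = {(v, w). v \<in> V \<and> w \<in> V \<and> adj V E v w}"

definition gdist :: "complex set \<Rightarrow> complex set set \<Rightarrow> complex \<Rightarrow> complex \<Rightarrow> enat" where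
  "gdist V E v w = (INF n \<in> {n. (v, w) \<in> adj_rel V E ^^ n}. enat n)"

definition Cut :: "complex set \<Rightarrow> complex set set \<Rightarrow> complex \<Rightarrow> complex set" where
  "Cut V E v = {w\<in>V. \<forall>w'. adj V E w w' \<longrightarrow> gdist V E v w' \<le> gdist V E v w}"

definition without_cut_locus :: "complex set \<Rightarrow> complex set set \<Rightarrow> bool" where
  "without_cut_locus V E \<longleftrightarrow> (\<forall>v\<in>V. Cut V E v = {})"

definition sphere_card :: "complex set \<Rightarrow> complex set set \<Rightarrow> complex \<Rightarrow> nat \<Rightarrow> nat" where
  "sphere_card V E v0 n = card {v\<in>V. gdist V E v0 v = enat n}"

definition growth :: "complex set \<Rightarrow> complex set set \<Rightarrow> complex \<Rightarrow> ereal" where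
  "growth V E v0 = limsup (\<lambda>n. ereal (ln (real (sphere_card V E v0 n)) / real n))"

end

theory Submission
  imports Defs
begin

text \<open>Every vertex at distance \<open>n + 1\<close> from \<open>v\<^sub>0\<close> is adjacent to one at distance \<open>n\<close>.
  Hence the sphere of radius \<open>n + 1\<close> lies in the neighbourhood of the sphere of radius \<open>n\<close>,
  and for \<open>n \<ge> 1\<close> each vertex of the latter spends one of its at most \<open>p\<close> edges on a
  predecessor. This gives \<open>\<sigma>\<^sub>n\<^sub>+\<^sub>1 \<le> p (p - 1)\<^sup>n\<close>, so \<open>limsup (log \<sigma>\<^sub>n) / n \<le> log (p - 1)\<close>.\<close>

lemma gdist_eq_enat_iff:
  "gdist V E v w = enat n \<longleftrightarrow>
     (v, w) \<in> adj_rel V E ^^ n \<and> (\<forall>m<n. (v, w) \<notin> adj_rel V E ^^ m)"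
proof (cases "\<exists>k. (v, w) \<in> adj_rel V E ^^ k")
  case False
  then show ?thesis by (auto simp: gdist_def top_enat_def)
next
  case True
  let ?S = "{k. (v, w) \<in> adj_rel V E ^^ k}"
  have least: "(LEAST k. k \<in> ?S) \<in> ?S"
    using True by (auto intro: LeastI)
  have "gdist V E v w = enat (LEAST k. k \<in> ?S)"
    unfolding gdist_def
    by (rule antisym, rule INF_lower[OF least], rule INF_greatest) (simp add: Least_le)
  moreover have "(LEAST k. k \<in> ?S) = n \<longleftrightarrow> n \<in> ?S \<and> (\<forall>m<n. m \<notin> ?S)"
  proof
    assume "(LEAST k. k \<in> ?S) = n"
    then show "n \<in> ?S \<and> (\<forall>m<n. m \<notin> ?S)"
      using least not_less_Least by blast
  next
    assume n: "n \<in> ?S \<and> (\<forall>m<n. m \<notin> ?S)"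
    show "(LEAST k. k \<in> ?S) = n"
      by (rule Least_equality) (use n leI in blast)+
  qed
  ultimately show ?thesis by auto
qed

lemma adj_sym: "adj V E u w \<Longrightarrow> adj V E w u"
  unfolding adj_def by (metis insert_commute)

lemma gdist_Suc_obtain_pred:
  assumes "gdist V E v w = enat (Suc k)"
  obtains u where "gdist V E v u = enat k" and "(u, w) \<in> adj_rel V E"
proof -
  have walk: "(v, w) \<in> adj_rel V E ^^ Suc k"
    and shortest: "\<forall>m<Suc k. (v, w) \<notin> adj_rel V E ^^ m"
    using assms by (auto simp: gdist_eq_enat_iff)
  from walk obtain u where vu: "(v, u) \<in> adj_rel V E ^^ k" and uw: "(u, w) \<in> adj_rel V E"
    by auto
  have "(v, u) \<notin> adj_rel V E ^^ m" if "m < k" for m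
    using shortest relpow_Suc_I[OF _ uw, of v m] that by auto
  then have "gdist V E v u = enat k"
    using vu by (simp add: gdist_eq_enat_iff)
  then show thesis using uw by (rule that)
qed

definition neighbours :: "complex set \<Rightarrow> complex set set \<Rightarrow> complex \<Rightarrow> complex set" where
  "neighbours V E u = {w\<in>V. adj V E u w \<and> w \<noteq> u}"

lemma
  assumes "finite {e\<in>E. u \<in> e}"
  shows finite_neighbours: "finite (neighbours V E u)"
    and card_neighbours_le_vdeg: "card (neighbours V E u) \<le> vdeg V E u"
proof -
  define edge where "edge w = (SOME e. e \<in> E \<and> e \<inter> V = {u, w})" for w
  have edge: "edge w \<in> E \<and> edge w \<inter> V = {u, w}" if "w \<in> neighbours V E u" for w
  proof -
    have "\<exists>e. e \<in> E \<and> e \<inter> V = {u, w}"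
      using that by (auto simp: neighbours_def adj_def)
    then show ?thesis
      unfolding edge_def by (rule someI_ex)
  qed
  have inj: "inj_on edge (neighbours V E u)"
  proof (rule inj_onI)
    fix x y assume x: "x \<in> neighbours V E u" and y: "y \<in> neighbours V E u"
      and "edge x = edge y"
    then have "{u, x} = {u, y}"
      using edge[OF x] edge[OF y] by simp
    moreover have "x \<noteq> u"
      using x by (simp add: neighbours_def)
    ultimately show "x = y"
      by (simp add: doubleton_eq_iff)
  qed
  have into: "edge ` neighbours V E u \<subseteq> {e\<in>E. u \<in> e}"
    using edge by blast
  show "finite (neighbours V E u)"
    using inj into assms by (rule inj_on_finite)
  show "card (neighbours V E u) \<le> vdeg V E u"
    unfolding vdeg_def using inj into assms by (rule card_inj_on_le)
qed

definition dist_sphere :: "complex set \<Rightarrow> complex set set \<Rightarrow> complex \<Rightarrow> nat \<Rightarrow> complex set" where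
  "dist_sphere V E v0 n = {v\<in>V. gdist V E v0 v = enat n}"

lemma dist_sphere_0: "v0 \<in> V \<Longrightarrow> dist_sphere V E v0 0 = {v0}"
  by (auto simp: dist_sphere_def gdist_eq_enat_iff)

lemma dist_sphere_Suc_subset:
  "dist_sphere V E v0 (Suc n) \<subseteq>
     (\<Union>u\<in>dist_sphere V E v0 n. neighbours V E u \<inter> dist_sphere V E v0 (Suc n))"
proof
  fix w assume w: "w \<in> dist_sphere V E v0 (Suc n)"
  then obtain u where "gdist V E v0 u = enat n" "(u, w) \<in> adj_rel V E"
    by (auto simp: dist_sphere_def elim: gdist_Suc_obtain_pred)
  with w show "w \<in> (\<Union>u\<in>dist_sphere V E v0 n. neighbours V E u \<inter> dist_sphere V E v0 (Suc n))"
    by (auto simp: dist_sphere_def neighbours_def adj_rel_def)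
qed

lemma card_forward_neighbours_le:
  assumes "finite {e\<in>E. u \<in> e}" and u: "u \<in> dist_sphere V E v0 (Suc n)"
  shows "card (neighbours V E u \<inter> dist_sphere V E v0 (Suc (Suc n))) \<le> vdeg V E u - 1"
proof -
  obtain x where x: "gdist V E v0 x = enat n" "(x, u) \<in> adj_rel V E"
    using u by (auto simp: dist_sphere_def elim: gdist_Suc_obtain_pred)
  have x_nb: "x \<in> neighbours V E u"
    using x u by (auto simp: neighbours_def adj_rel_def dist_sphere_def intro: adj_sym)
  have "neighbours V E u \<inter> dist_sphere V E v0 (Suc (Suc n)) \<subseteq> neighbours V E u - {x}"
    using x by (auto simp: dist_sphere_def)
  then have "card (neighbours V E u \<inter> dist_sphere V E v0 (Suc (Suc n)))
      \<le> card (neighbours V E u - {x})"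
    using finite_neighbours[OF assms(1)] by (intro card_mono) auto
  also have "\<dots> = card (neighbours V E u) - 1"
    using x_nb finite_neighbours[OF assms(1)] by simp
  also have "\<dots> \<le> vdeg V E u - 1"
    using card_neighbours_le_vdeg[OF assms(1)] by (rule diff_le_mono)
  finally show ?thesis .
qed

lemma card_dist_sphere_Suc_le:
  assumes locfin: "\<forall>v\<in>V. finite {e\<in>E. v \<in> e}"
    and deg: "\<forall>v\<in>V. vdeg V E v \<le> d"
    and "v0 \<in> V"
  shows "card (dist_sphere V E v0 (Suc n)) \<le> d * (d - 1) ^ n"
proof -
  let ?S = "dist_sphere V E v0"
  let ?forward = "\<lambda>k u. neighbours V E u \<inter> ?S (Suc k)"
  have in_V: "u \<in> V" if "u \<in> ?S k" for u k
    using that by (simp add: dist_sphere_def)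
  have fin_forward: "finite (?forward k u)" if "u \<in> ?S j" for j k u
    using finite_neighbours[of E u V] locfin in_V[OF that] by blast
  have fin: "finite (?S n)" for n
  proof (induction n)
    case 0
    then show ?case using dist_sphere_0[OF \<open>v0 \<in> V\<close>] by simp
  next
    case (Suc n)
    have "finite (\<Union>u\<in>?S n. ?forward n u)"
      using Suc.IH fin_forward by blast
    then show ?case
      using dist_sphere_Suc_subset[of V E v0 n] by (rule rev_finite_subset)
  qed
  have forward_le: "card (?forward (Suc k) u) \<le> d - 1" if "u \<in> ?S (Suc k)" for k u
  proof -
    have "card (?forward (Suc k) u) \<le> vdeg V E u - 1"
      using card_forward_neighbours_le[of E u V v0 k] locfin in_V[OF that] that by blast
    also have "\<dots> \<le> d - 1"
      using deg in_V[OF that] by (simp add: diff_le_mono)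
    finally show ?thesis .
  qed
  have step: "card (?S (Suc (Suc k))) \<le> (d - 1) * card (?S (Suc k))" for k
  proof -
    have "card (?S (Suc (Suc k))) \<le> card (\<Union>u\<in>?S (Suc k). ?forward (Suc k) u)"
    proof (rule card_mono)
      show "finite (\<Union>u\<in>?S (Suc k). ?forward (Suc k) u)"
        using fin[of "Suc k"] fin_forward by blast
    qed (rule dist_sphere_Suc_subset)
    also have "\<dots> \<le> (\<Sum>u\<in>?S (Suc k). card (?forward (Suc k) u))"
      by (rule card_UN_le[OF fin])
    also have "\<dots> \<le> (\<Sum>u\<in>?S (Suc k). d - 1)"
      by (rule sum_mono) (rule forward_le)
    finally show ?thesis by (simp add: mult.commute)
  qed
  have first: "card (?S (Suc 0)) \<le> d"
  proof -
    have "?S (Suc 0) \<subseteq> neighbours V E v0"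
      using dist_sphere_Suc_subset[of V E v0 0] dist_sphere_0[OF \<open>v0 \<in> V\<close>] by auto
    then have "card (?S (Suc 0)) \<le> card (neighbours V E v0)"
      using finite_neighbours[of E v0 V] locfin \<open>v0 \<in> V\<close> by (intro card_mono) auto
    also have "\<dots> \<le> d"
      using card_neighbours_le_vdeg[of E v0 V] locfin deg \<open>v0 \<in> V\<close> by fastforce
    finally show ?thesis .
  qed
  show "card (?S (Suc n)) \<le> d * (d - 1) ^ n"
  proof (induction n)
    case 0
    then show ?case using first by simp
  next
    case (Suc n)
    have "card (?S (Suc (Suc n))) \<le> (d - 1) * card (?S (Suc n))"
      by (rule step)
    also have "\<dots> \<le> (d - 1) * (d * (d - 1) ^ n)"
      using Suc.IH by (rule mult_le_mono2)
    also have "\<dots> = d * (d - 1) ^ Suc n"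
      by simp
    finally show ?case .
  qed
qed

lemma limsup_ln_over_n_le:
  fixes \<sigma> :: "nat \<Rightarrow> nat" and C q :: real
  assumes "q \<ge> 1" and "C > 0" and bound: "\<forall>\<^sub>F n in sequentially. real (\<sigma> n) \<le> C * q ^ n"
  shows "limsup (\<lambda>n. ereal (ln (real (\<sigma> n)) / real n)) \<le> ereal (ln q)"
proof -
  \<comment> \<open>\<open>\<bar>ln C\<bar>\<close> rather than \<open>ln C\<close>: the bound must also cover the terms with \<open>\<sigma> n = 0\<close>,
     where \<open>ln 0 = 0\<close>.\<close>
  let ?c = "\<bar>ln C\<bar>"
  have pointwise: "ln (real (\<sigma> n)) / real n \<le> ln q + ?c / real n"
    if n: "n \<ge> 1" and \<sigma>: "real (\<sigma> n) \<le> C * q ^ n" for n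
  proof (cases "\<sigma> n = 0")
    case True
    then show ?thesis using \<open>q \<ge> 1\<close> by simp
  next
    case False
    then have "ln (real (\<sigma> n)) \<le> ln (C * q ^ n)"
      using \<sigma> by simp
    also have "\<dots> = ln C + real n * ln q"
      using assms(1,2) by (simp add: ln_mult ln_realpow)
    finally show ?thesis
      using n by (simp add: field_simps)
  qed
  have "\<forall>\<^sub>F n in sequentially.
      ereal (ln (real (\<sigma> n)) / real n) \<le> ereal (ln q + ?c / real n)"
    using eventually_conj[OF bound eventually_ge_at_top[of 1]]
    by (rule eventually_mono) (simp add: pointwise)
  then have "limsup (\<lambda>n. ereal (ln (real (\<sigma> n)) / real n))
      \<le> limsup (\<lambda>n. ereal (ln q + ?c / real n))"
    by (rule Limsup_mono)
  also have "\<dots> = ereal (ln q)"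
    by (rule lim_imp_Limsup)
      (simp_all add: lim_ereal tendsto_add[OF tendsto_const lim_const_over_n, simplified])
  finally show ?thesis .
qed

theorem theorem4:
  fixes V :: "complex set" and E :: "complex set set" and p :: nat and v0 :: complex
  assumes "p \<ge> 3"
    and "locally_tessellating V E"
    and "without_cut_locus V E"
    and "\<forall>v\<in>V. vdeg V E v \<le> p"
    and "v0 \<in> V"
  shows "growth V E v0 \<le> ereal (ln (real p - 1))"
proof -
  have locfin: "\<forall>v\<in>V. finite {e\<in>E. v \<in> e}"
    using assms(2) by (auto simp: locally_tessellating_def simple_planar_graph_def)
  have bound: "real (sphere_card V E v0 (Suc k)) \<le> real p / (real p - 1) * (real p - 1) ^ Suc k"
    for k
  proof -
    have "sphere_card V E v0 (Suc k) \<le> p * (p - 1) ^ k"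
      using card_dist_sphere_Suc_le[OF locfin assms(4,5)]
      by (simp add: sphere_card_def dist_sphere_def)
    then have "real (sphere_card V E v0 (Suc k)) \<le> real (p * (p - 1) ^ k)"
      by (simp only: of_nat_le_iff)
    also have "\<dots> = real p / (real p - 1) * (real p - 1) ^ Suc k"
      using assms(1) by (simp add: of_nat_diff)
    finally show ?thesis .
  qed
  have "\<forall>\<^sub>F n in sequentially.
      real (sphere_card V E v0 n) \<le> real p / (real p - 1) * (real p - 1) ^ n"
  proof (rule eventually_sequentiallyI)
    fix n :: nat assume "1 \<le> n"
    then obtain k where "n = Suc k" by (cases n) auto
    then show "real (sphere_card V E v0 n) \<le> real p / (real p - 1) * (real p - 1) ^ n"
      using bound by simp
  qed
  moreover have "real p - 1 \<ge> 1" and "real p / (real p - 1) > 0"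
    using assms(1) by simp_all
  ultimately show ?thesis
    unfolding growth_def by (intro limsup_ln_over_n_le)
qed

end
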